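(* Let $\mathbf{J}\in\mathbb{R}^{n\times n}$ be a real symmetric matrix with zero diagonal, let $\alpha,\beta>0$, and define $\mathcal{E}(\boldsymbol{x})=-\frac12\boldsymbol{x}^\top\mathbf{J}\boldsymbol{x}$, $\mathcal{A}(\boldsymbol{x})=\frac{\beta}{4}\sum_i x_i^4-\frac{\alpha}{2}\sum_i x_i^2$ and $\mathcal{H}=\mathcal{A}+\mathcal{E}$ on $\mathbb{R}^n$. Suppose $\boldsymbol{x}^*$ is a minimizer of $\mathcal{H}$ over $\mathbb{R}^n$ and $\boldsymbol{x}^*\in\{-\lambda,\lambda\}^n$ for some $\lambda>0$. Then $\mathrm{sign}(\boldsymbol{x}^* )$ (componentwise sign) is a minimizer of $\mathcal{E}$ over $\{-1,+1\}^n$. *)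

theory Defs
  imports "HOL-Analysis.Analysis"
begin

definition ising_energy :: "real^'n^'n \<Rightarrow> real^'n \<Rightarrow> real" where
  "ising_energy J x = - (1/2) * (x \<bullet> (J *v x))"

definition anharmonic :: "real \<Rightarrow> real \<Rightarrow> real^'n \<Rightarrow> real" where
  "anharmonic \<alpha> \<beta> x = \<beta>/4 * (\<Sum>i\<in>UNIV. (x$i)^4) - \<alpha>/2 * (\<Sum>i\<in>UNIV. (x$i)^2)"

definition hamiltonian :: "real \<Rightarrow> real \<Rightarrow> real^'n^'n \<Rightarrow> real^'n \<Rightarrow> real" where
  "hamiltonian \<alpha> \<beta> J x = anharmonic \<alpha> \<beta> x + ising_energy J x"

definition spin_configs :: "(real^'n) set" where
  "spin_configs = {s. \<forall>i. s$i = 1 \<or> s$i = -1}"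

end

theory Submission
  imports Defs
begin

(* On the scaled spin configurations lam *R s the anharmonic term takes one and the same value,
   since it depends only on the squares of the coordinates, and the Ising energy is quadratic,
   so there the Hamiltonian is a constant plus lam^2 times the Ising energy of s. A global
   minimiser of the Hamiltonian of the form lam *R s therefore minimises the Ising energy over
   the spin configurations. *)

lemma matrix_vector_mult_scaleR: "(A::real^'n^'m) *v (c *\<^sub>R x) = c *\<^sub>R (A *v x)"
  by (simp add: vec_eq_iff matrix_vector_mult_def sum_distrib_left algebra_simps)

lemma ising_energy_scaleR: "ising_energy J (c *\<^sub>R x) = c\<^sup>2 * ising_energy J x"
  by (simp add: ising_energy_def matrix_vector_mult_scaleR power2_eq_square)

lemma spin_configs_component_power2:
  assumes "s \<in> spin_configs"
  shows "((c *\<^sub>R s)$i)\<^sup>2 = c\<^sup>2"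
proof -
  have "s$i = 1 \<or> s$i = -1"
    using assms unfolding spin_configs_def by blast
  then show ?thesis
    by auto
qed

lemma anharmonic_scaleR_spin:
  fixes s :: "real^'n"
  assumes "s \<in> spin_configs"
  shows "anharmonic \<alpha> \<beta> (c *\<^sub>R s) = CARD('n) * (\<beta>/4 * c^4 - \<alpha>/2 * c\<^sup>2)"
proof -
  have sq: "((c *\<^sub>R s)$i)\<^sup>2 = c\<^sup>2" for i
    using spin_configs_component_power2[OF assms] .
  have fourth: "((c *\<^sub>R s)$i)^4 = c^4" for i
  proof -
    have "((c *\<^sub>R s)$i)^4 = (((c *\<^sub>R s)$i)\<^sup>2)\<^sup>2"
      by (simp flip: power_mult)
    also have "\<dots> = c^4"
      unfolding sq by (simp flip: power_mult)
    finally show ?thesis .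
  qed
  show ?thesis
    unfolding anharmonic_def sq fourth by (simp add: algebra_simps)
qed

lemma hamiltonian_scaleR_spin:
  fixes s :: "real^'n"
  assumes "s \<in> spin_configs"
  shows "hamiltonian \<alpha> \<beta> J (c *\<^sub>R s)
           = CARD('n) * (\<beta>/4 * c^4 - \<alpha>/2 * c\<^sup>2) + c\<^sup>2 * ising_energy J s"
  using assms by (simp add: hamiltonian_def anharmonic_scaleR_spin ising_energy_scaleR)

lemma sgn_vector_in_spin_configs:
  assumes "\<forall>i. x$i \<noteq> 0"
  shows "(\<chi> i. sgn (x$i)) \<in> spin_configs"
  using assms unfolding spin_configs_def by (auto simp: sgn_real_def)

lemma eq_scaleR_sgn_vector:
  assumes "lam > 0" and "\<forall>i. x$i = lam \<or> x$i = -lam"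
  shows "x = lam *\<^sub>R (\<chi> i. sgn (x$i))"
  using assms by (auto simp: vec_eq_iff) (metis sgn_neg sgn_pos neg_less_0_iff_less mult.right_neutral
                                            mult_minus1_right)

theorem propositionS5:
  fixes J :: "real^'n^'n" and \<alpha> \<beta> lam :: real and xstar :: "real^'n"
  assumes "transpose J = J"
    and "\<forall>i. J$i$i = 0"
    and "\<alpha> > 0" and "\<beta> > 0"
    and "\<forall>y. hamiltonian \<alpha> \<beta> J xstar \<le> hamiltonian \<alpha> \<beta> J y"
    and "lam > 0"
    and "\<forall>i. xstar$i = lam \<or> xstar$i = -lam"
  shows "(\<chi> i. sgn (xstar$i)) \<in> spin_configs \<and>
         (\<forall>s\<in>spin_configs. ising_energy J (\<chi> i. sgn (xstar$i)) \<le> ising_energy J s)"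
proof -
  define z :: "real^'n" where "z = (\<chi> i. sgn (xstar$i))"
  have z_spin: "z \<in> spin_configs"
    unfolding z_def using assms(6,7)
    by (intro sgn_vector_in_spin_configs) (metis less_irrefl neg_0_equal_iff_equal)
  have xstar_eq: "xstar = lam *\<^sub>R z"
    unfolding z_def using assms(6,7) by (rule eq_scaleR_sgn_vector)
  have "ising_energy J z \<le> ising_energy J s" if "s \<in> spin_configs" for s
  proof -
    have "hamiltonian \<alpha> \<beta> J (lam *\<^sub>R z) \<le> hamiltonian \<alpha> \<beta> J (lam *\<^sub>R s)"
      using assms(5) xstar_eq by simp
    then have "lam\<^sup>2 * ising_energy J z \<le> lam\<^sup>2 * ising_energy J s"
      using z_spin that by (simp add: hamiltonian_scaleR_spin)
    then show ?thesis
      using assms(6) by simp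
  qed
  with z_spin show ?thesis
    unfolding z_def by blast
qed

end
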